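(* Let $X$ be a paracompact topological space, let $Y$ be a Banach space, and let $f:X\to Y$ be a function. Then $f$ is Baire-1 if and only if there is a sequence $(G_n)_{n=1}^{\infty}$ of open strips in $X\times Y$ such that $\bigcap_{n=1}^{\infty}G_n=gr(f)$ and $diam(G_n(x))\to 0$ as $n\to\infty$ for each $x\in X$.
   Context: $gr(f)=\{(x,f(x)):x\in X\}\subseteq X\times Y$ is the graph of $f$. For $G\subseteq X\times Y$ and $x\in X$, the vertical section is $G(x)=\{y\in Y:(x,y)\in G\}$ (identified with $G\cap(\{x\}\times Y)$). An open strip is an open set $G\subseteq X\times Y$ such that $G(x)$ is convex for every $x\in X$. The diameter is taken with respect to the norm of $Y$. A function is Baire-0 if it is continuous, and for a countable ordinal $\alpha\ge 1$ it is Baire-$\alpha$ if it is the pointwise limit of a sequence of functions $f_n$, each Baire-$\alpha_n$ for some $\alpha_n<\alpha$; in particular, Baire-1 functions are pointwise limits of sequences of continuous functions. *)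

theory Defs
  imports "HOL-Analysis.Analysis"
begin

text \<open>Paracompactness of the whole space (type): every open cover has a locally
  finite open refinement.  Hausdorffness is imposed separately via the class t2_space.\<close>
definition paracompact_space :: "'a::topological_space itself \<Rightarrow> bool" where
  "paracompact_space _ \<longleftrightarrow>
     (\<forall>\<U>::'a set set. (\<forall>U\<in>\<U>. open U) \<and> \<Union>\<U> = UNIV \<longrightarrow>
        (\<exists>\<V>::'a set set. (\<forall>V\<in>\<V>. open V) \<and> \<Union>\<V> = UNIV \<and>
              (\<forall>V\<in>\<V>. \<exists>U\<in>\<U>. V \<subseteq> U) \<and> locally_finite_in euclidean \<V>))"

definition baire1 :: "('a::topological_space \<Rightarrow> 'b::topological_space) \<Rightarrow> bool" where
  "baire1 f \<longleftrightarrow> (\<exists>g :: nat \<Rightarrow> 'a \<Rightarrow> 'b. (\<forall>n. continuous_on UNIV (g n)) \<and>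
                                     (\<forall>x. (\<lambda>n. g n x) \<longlonglongrightarrow> f x))"

definition graph_of :: "('a \<Rightarrow> 'b) \<Rightarrow> ('a \<times> 'b) set" where
  "graph_of f = {(x, f x) | x. True}"

definition vsection :: "('a \<times> 'b) set \<Rightarrow> 'a \<Rightarrow> 'b set" where
  "vsection G x = {y. (x, y) \<in> G}"

definition open_strip :: "('a::topological_space \<times> 'b::real_normed_vector) set \<Rightarrow> bool" where
  "open_strip G \<longleftrightarrow> open G \<and> (\<forall>x. convex (vsection G x))"

text \<open>Diameter with values in the extended reals, so unbounded sets have diameter \<infinity>.\<close>
definition ediam :: "'b::metric_space set \<Rightarrow> ereal" where
  "ediam S = (SUP p\<in>S \<times> S. ereal (dist (fst p) (snd p)))"

end

theory Submission
  imports Defs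
begin

text \<open>
  If \<open>f = lim g\<^sub>n\<close> with continuous \<open>g\<^sub>n\<close>, let the \<open>n\<close>-th strip be the union of the balls around
  \<open>g\<^sub>n(x)\<close> of radius \<open>d(g\<^sub>k(x), g\<^sub>m(x)) + 1/(n+1)\<close> for \<open>k, m \<ge> n\<close>. It is open, its sections are
  convex (concentric balls), contain \<open>f(x)\<close>, and shrink to \<open>f(x)\<close> because \<open>(g\<^sub>n(x))\<close> is Cauchy.

  Conversely, on a paracompact Hausdorff space an open set with nonempty convex sections has
  a continuous selection: a point chosen in the section over \<open>x\<close> stays in the set over a
  neighbourhood of \<open>x\<close>; refine these neighbourhoods to a locally finite open cover and glue
  the chosen points with a partition of unity, whose convex combinations stay in the sections.
  Selections \<open>g\<^sub>n\<close> of the strips \<open>G\<^sub>n\<close> converge to \<open>f\<close>, since \<open>g\<^sub>n(x)\<close> and \<open>f(x)\<close> both lie in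
  \<open>G\<^sub>n(x)\<close>, whose diameter tends to \<open>0\<close>.
\<close>

lemma ediam_le_ereal:
  assumes "\<And>y z. y \<in> S \<Longrightarrow> z \<in> S \<Longrightarrow> dist y z \<le> r"
  shows "ediam S \<le> ereal r"
  unfolding ediam_def using assms by (auto intro!: SUP_least)

lemma dist_le_ediam:
  assumes "y \<in> S" "z \<in> S"
  shows "ereal (dist y z) \<le> ediam S"
  unfolding ediam_def using assms by (auto intro!: SUP_upper2[of "(y, z)"])

lemma ediam_nonneg:
  assumes "y \<in> S"
  shows "0 \<le> ediam S"
  using dist_le_ediam[OF assms assms] by (simp add: zero_ereal_def)

lemma tendsto_ediam_zeroI:
  assumes "\<And>n. y n \<in> S n"
    and "\<And>e. e > 0 \<Longrightarrow> eventually (\<lambda>n. \<forall>z\<in>S n. \<forall>w\<in>S n. dist z w \<le> e) sequentially"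
  shows "(\<lambda>n. ediam (S n)) \<longlonglongrightarrow> 0"
proof (rule order_tendstoI)
  fix a :: ereal
  assume "a < 0"
  then show "eventually (\<lambda>n. a < ediam (S n)) sequentially"
    using ediam_nonneg[OF assms(1)] by (intro always_eventually allI) (rule order.strict_trans2)
next
  fix a :: ereal
  assume "0 < a"
  then obtain e where e: "0 < ereal e" "ereal e < a"
    using ereal_dense2 by blast
  have "eventually (\<lambda>n. \<forall>z\<in>S n. \<forall>w\<in>S n. dist z w \<le> e) sequentially"
    using assms(2) e(1) by simp
  then show "eventually (\<lambda>n. ediam (S n) < a) sequentially"
    by eventually_elim (use e(2) in \<open>auto intro: order.strict_trans1 ediam_le_ereal\<close>)
qed

lemma tendsto_dist_of_ediam_zero:
  assumes "(\<lambda>n. ediam (S n)) \<longlonglongrightarrow> 0" "\<And>n. y n \<in> S n" "\<And>n. z n \<in> S n"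
  shows "(\<lambda>n. dist (y n) (z n)) \<longlonglongrightarrow> 0"
proof -
  have "(\<lambda>n. ereal (dist (y n) (z n))) \<longlonglongrightarrow> 0"
    by (rule tendsto_sandwich[OF _ _ tendsto_const assms(1)])
      (auto intro!: always_eventually dist_le_ediam assms(2,3))
  then show ?thesis
    by (simp add: zero_ereal_def)
qed

lemma convex_Union_concentric_balls:
  fixes c :: "'a::real_normed_vector" and r :: "'i \<Rightarrow> real"
  shows "convex (\<Union>i\<in>I. ball c (r i))"
  unfolding convex_def
proof (intro ballI allI impI)
  fix y z and u v :: real
  assume "y \<in> (\<Union>i\<in>I. ball c (r i))" "z \<in> (\<Union>i\<in>I. ball c (r i))"
    and uv: "0 \<le> u" "0 \<le> v" "u + v = 1"
  then obtain i j where "i \<in> I" "j \<in> I" "y \<in> ball c (r i)" "z \<in> ball c (r j)"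
    by blast
  then obtain k where "k \<in> I" "y \<in> ball c (r k)" "z \<in> ball c (r k)"
    using linear[of "r i" "r j"] by (metis mem_ball order.strict_trans2)
  then show "u *\<^sub>R y + v *\<^sub>R z \<in> (\<Union>i\<in>I. ball c (r i))"
    using convex_ball[of c "r k"] uv unfolding convex_def by blast
qed

definition cauchy_strip :: "(nat \<Rightarrow> 'a \<Rightarrow> 'b::metric_space) \<Rightarrow> nat \<Rightarrow> ('a \<times> 'b) set" where
  "cauchy_strip g n =
     {(x, y). \<exists>k\<ge>n. \<exists>m\<ge>n. dist (g n x) y < dist (g k x) (g m x) + 1 / Suc n}"

lemma vsection_cauchy_strip:
  "vsection (cauchy_strip g n) x =
     (\<Union>p\<in>{n..} \<times> {n..}. ball (g n x) (dist (g (fst p) x) (g (snd p) x) + 1 / Suc n))"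
  unfolding vsection_def cauchy_strip_def by fastforce

lemma center_in_vsection_cauchy_strip: "g n x \<in> vsection (cauchy_strip g n) x"
  unfolding vsection_def cauchy_strip_def by (auto intro!: exI[of _ n])

lemma convex_vsection_cauchy_strip:
  fixes g :: "nat \<Rightarrow> 'a \<Rightarrow> 'b::real_normed_vector"
  shows "convex (vsection (cauchy_strip g n) x)"
  unfolding vsection_cauchy_strip by (rule convex_Union_concentric_balls)

lemma open_cauchy_strip:
  fixes g :: "nat \<Rightarrow> 'a::topological_space \<Rightarrow> 'b::metric_space"
  assumes "\<And>k. continuous_on UNIV (g k)"
  shows "open (cauchy_strip g n)"
proof -
  have cont: "continuous_on UNIV (\<lambda>p::'a \<times> 'b. g k (fst p))" for k
    by (rule continuous_on_compose2[OF assms]) (auto intro: continuous_intros)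
  have "cauchy_strip g n = (\<Union>k\<in>{n..}. \<Union>m\<in>{n..}.
      {p. dist (g n (fst p)) (snd p) < dist (g k (fst p)) (g m (fst p)) + 1 / Suc n})"
    unfolding cauchy_strip_def by fastforce
  also have "open \<dots>"
    by (intro open_UN ballI open_Collect_less continuous_intros cont)
  finally show ?thesis .
qed

lemma cauchy_strip_sections_shrink:
  assumes "Cauchy (\<lambda>n. g n x)" "e > 0"
  shows "eventually (\<lambda>n. vsection (cauchy_strip g n) x \<subseteq> ball (g n x) e) sequentially"
proof -
  obtain N where N: "\<And>k m. k \<ge> N \<Longrightarrow> m \<ge> N \<Longrightarrow> dist (g k x) (g m x) < e / 2"
    using assms metric_CauchyD[of "\<lambda>n. g n x" "e / 2"] by auto
  have "eventually (\<lambda>n. 1 / real (Suc n) < e / 2) sequentially"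
    using order_tendstoD(2)[OF LIMSEQ_inverse_real_of_nat, of "e / 2"] assms(2)
    by (simp add: inverse_eq_divide)
  moreover have "eventually (\<lambda>n. n \<ge> N) sequentially"
    by (rule eventually_ge_at_top)
  ultimately show ?thesis
  proof eventually_elim
    case (elim n)
    show ?case
    proof
      fix y assume "y \<in> vsection (cauchy_strip g n) x"
      then obtain k m where "k \<ge> n" "m \<ge> n"
        "dist (g n x) y < dist (g k x) (g m x) + 1 / Suc n"
        unfolding vsection_def cauchy_strip_def by auto
      with elim N[of k m] show "y \<in> ball (g n x) e"
        by simp
    qed
  qed
qed

lemma graph_in_cauchy_strip:
  assumes "(\<lambda>k. g k x) \<longlonglongrightarrow> f x"
  shows "(x, f x) \<in> cauchy_strip g n"
proof -
  have "(\<lambda>k. dist (g k x) (g n x)) \<longlonglongrightarrow> dist (f x) (g n x)"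
    by (intro tendsto_intros assms)
  then have "eventually (\<lambda>k. dist (f x) (g n x) - 1 / Suc n < dist (g k x) (g n x)) sequentially"
    by (rule order_tendstoD) simp
  then obtain K where K: "\<And>k. k \<ge> K \<Longrightarrow> dist (f x) (g n x) - 1 / Suc n < dist (g k x) (g n x)"
    unfolding eventually_sequentially by blast
  have "dist (g n x) (f x) < dist (g (max K n) x) (g n x) + 1 / Suc n"
    using K[of "max K n"] by (simp add: dist_commute)
  then show ?thesis
    unfolding cauchy_strip_def using max.cobounded2[of n K] order_refl by blast
qed

lemma Inter_cauchy_strip:
  assumes "\<And>x. (\<lambda>k. g k x) \<longlonglongrightarrow> f x"
  shows "(\<Inter>n. cauchy_strip g n) = graph_of f"
proof
  show "graph_of f \<subseteq> (\<Inter>n. cauchy_strip g n)"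
    unfolding graph_of_def by (auto intro: graph_in_cauchy_strip assms)
next
  show "(\<Inter>n. cauchy_strip g n) \<subseteq> graph_of f"
  proof
    fix p assume "p \<in> (\<Inter>n. cauchy_strip g n)"
    then obtain x y where p: "p = (x, y)" and y: "\<And>n. (x, y) \<in> cauchy_strip g n"
      by (cases p) auto
    have "(\<lambda>n. g n x) \<longlonglongrightarrow> y"
    proof (rule tendstoI)
      fix e :: real assume "e > 0"
      then have "eventually (\<lambda>n. vsection (cauchy_strip g n) x \<subseteq> ball (g n x) e) sequentially"
        by (intro cauchy_strip_sections_shrink LIMSEQ_imp_Cauchy[OF assms])
      then show "eventually (\<lambda>n. dist (g n x) y < e) sequentially"
        by eventually_elim (use y in \<open>auto simp: vsection_def subset_iff\<close>)
    qed
    then have "y = f x"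
      using assms LIMSEQ_unique by blast
    then show "p \<in> graph_of f"
      unfolding graph_of_def p by blast
  qed
qed

lemma ediam_vsection_cauchy_strip_tendsto_0:
  fixes g :: "nat \<Rightarrow> 'a \<Rightarrow> 'b::metric_space"
  assumes "Cauchy (\<lambda>n. g n x)"
  shows "(\<lambda>n. ediam (vsection (cauchy_strip g n) x)) \<longlonglongrightarrow> 0"
proof (rule tendsto_ediam_zeroI[OF center_in_vsection_cauchy_strip])
  fix e :: real assume "e > 0"
  then have "eventually (\<lambda>n. vsection (cauchy_strip g n) x \<subseteq> ball (g n x) (e / 2)) sequentially"
    by (intro cauchy_strip_sections_shrink assms) simp
  then show "eventually (\<lambda>n. \<forall>z\<in>vsection (cauchy_strip g n) x.
      \<forall>w\<in>vsection (cauchy_strip g n) x. dist z w \<le> e) sequentially"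
  proof eventually_elim
    case (elim n)
    show ?case
    proof (intro ballI)
      fix z w assume "z \<in> vsection (cauchy_strip g n) x" "w \<in> vsection (cauchy_strip g n) x"
      with elim have "dist z (g n x) < e / 2" "dist w (g n x) < e / 2"
        by (auto simp: dist_commute)
      then show "dist z w \<le> e"
        using dist_triangle_half_l by fastforce
    qed
  qed
qed

lemma baire1_imp_shrinking_open_strips:
  fixes f :: "'a::topological_space \<Rightarrow> 'b::real_normed_vector"
  assumes "baire1 f"
  shows "\<exists>G :: nat \<Rightarrow> ('a \<times> 'b) set. (\<forall>n. open_strip (G n)) \<and> (\<Inter>n. G n) = graph_of f \<and>
           (\<forall>x. (\<lambda>n. ediam (vsection (G n) x)) \<longlonglongrightarrow> 0)"
proof -
  obtain g :: "nat \<Rightarrow> 'a \<Rightarrow> 'b" where cont: "\<And>n. continuous_on UNIV (g n)"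
    and lim: "\<And>x. (\<lambda>n. g n x) \<longlonglongrightarrow> f x"
    using assms unfolding baire1_def by blast
  show ?thesis
  proof (intro exI[of _ "cauchy_strip g"] conjI allI)
    show "open_strip (cauchy_strip g n)" for n
      unfolding open_strip_def
      by (simp add: open_cauchy_strip[of g, OF cont] convex_vsection_cauchy_strip)
    show "(\<Inter>n. cauchy_strip g n) = graph_of f"
      by (rule Inter_cauchy_strip[OF lim])
    show "(\<lambda>n. ediam (vsection (cauchy_strip g n) x)) \<longlonglongrightarrow> 0" for x
      by (rule ediam_vsection_cauchy_strip_tendsto_0[OF LIMSEQ_imp_Cauchy[OF lim]])
  qed
qed

lemma paracompact_spaceD:
  fixes \<U> :: "'a::topological_space set set"
  assumes "paracompact_space TYPE('a)" "\<forall>U\<in>\<U>. open U" "\<Union>\<U> = UNIV"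
  shows "\<exists>\<V>. (\<forall>V\<in>\<V>. open V) \<and> \<Union>\<V> = UNIV \<and> (\<forall>V\<in>\<V>. \<exists>U\<in>\<U>. V \<subseteq> U) \<and>
           locally_finite_in euclidean \<V>"
  using assms unfolding paracompact_space_def by blast

lemma paracompact_closure_separation:
  fixes C A :: "'a::topological_space set"
  assumes P: "paracompact_space TYPE('a)" and "closed C"
    and nbhd: "\<And>c. c \<in> C \<Longrightarrow> \<exists>W. open W \<and> c \<in> W \<and> closure W \<inter> A = {}"
  shows "\<exists>W. open W \<and> C \<subseteq> W \<and> closure W \<inter> A = {}"
proof -
  obtain w where w: "\<And>c. c \<in> C \<Longrightarrow> open (w c) \<and> c \<in> w c \<and> closure (w c) \<inter> A = {}"
    using nbhd by metis
  define \<U> where "\<U> = insert (- C) (w ` C)"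
  have \<U>: "\<forall>U\<in>\<U>. open U" "\<Union>\<U> = UNIV"
    unfolding \<U>_def using w \<open>closed C\<close> by auto
  obtain \<V> where \<V>: "\<forall>V\<in>\<V>. open V" "\<Union>\<V> = UNIV"
    "\<forall>V\<in>\<V>. \<exists>U\<in>\<U>. V \<subseteq> U" "locally_finite_in euclidean \<V>"
    using paracompact_spaceD[OF P \<U>] by blast
  define \<V>' where "\<V>' = {V\<in>\<V>. V \<inter> C \<noteq> {}}"
  have "locally_finite_in euclidean \<V>'"
    by (rule locally_finite_in_subset[OF \<V>(4)]) (auto simp: \<V>'_def)
  then have "closure (\<Union>\<V>') = (\<Union>V\<in>\<V>'. closure V)"
    using closure_of_locally_finite_Union by fastforce
  moreover have "closure V \<inter> A = {}" if "V \<in> \<V>'" for V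
  proof -
    have "V \<in> \<V>" "V \<inter> C \<noteq> {}"
      using that unfolding \<V>'_def by auto
    then obtain U where "U \<in> \<U>" "V \<subseteq> U" "V \<inter> C \<noteq> {}"
      using \<V>(3) by blast
    then obtain c where "c \<in> C" "V \<subseteq> w c"
      unfolding \<U>_def by blast
    then have "closure V \<subseteq> closure (w c)"
      by (simp add: closure_mono)
    with w[OF \<open>c \<in> C\<close>] show ?thesis
      by blast
  qed
  moreover have "C \<subseteq> \<Union>\<V>'"
    using \<V>(2) unfolding \<V>'_def by blast
  moreover have "open (\<Union>\<V>')"
    using \<V>(1) unfolding \<V>'_def by blast
  ultimately show ?thesis
    by (intro exI[of _ "\<Union>\<V>'"]) auto
qed

lemma paracompact_t2_regular:
  fixes V :: "'a::t2_space set"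
  assumes P: "paracompact_space TYPE('a)" and "open V" "x \<in> V"
  shows "\<exists>W. open W \<and> x \<in> W \<and> closure W \<subseteq> V"
proof -
  have sep: "\<exists>U. open U \<and> c \<in> U \<and> closure U \<inter> {x} = {}" if "c \<in> - V" for c
  proof -
    have "x \<noteq> c"
      using \<open>x \<in> V\<close> that by auto
    then obtain U U' where UU': "open U" "open U'" "c \<in> U" "x \<in> U'" "U \<inter> U' = {}"
      by (metis hausdorff)
    then have "U' \<inter> closure U = {}"
      by (simp add: open_Int_closure_eq_empty Int_commute)
    with UU' show ?thesis
      by blast
  qed
  have "closed (- V)"
    using \<open>open V\<close> by auto
  then obtain W where W: "open W" "- V \<subseteq> W" "closure W \<inter> {x} = {}"
    using paracompact_closure_separation[OF P \<open>closed (- V)\<close> sep] by blast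
  have "closure (- closure W) \<inter> W = {}"
    using open_Int_closure_eq_empty[OF \<open>open W\<close>, of "- closure W"] closure_subset[of W]
    by (auto simp: Int_commute)
  with W show ?thesis
    by (intro exI[of _ "- closure W"]) auto
qed

lemma paracompact_t2_imp_normal_space:
  assumes P: "paracompact_space TYPE('a::t2_space)"
  shows "normal_space (euclidean :: 'a topology)"
  unfolding normal_space_def
proof (intro allI impI)
  fix C D :: "'a set"
  assume "closedin euclidean C \<and> closedin euclidean D \<and> disjnt C D"
  then have "closed C" "open (- D)" "C \<subseteq> - D"
    by (auto simp: disjnt_def)
  have sep: "\<exists>W. open W \<and> c \<in> W \<and> closure W \<inter> D = {}" if "c \<in> C" for c
  proof -
    have "c \<in> - D"
      using that \<open>C \<subseteq> - D\<close> by blast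
    then obtain W where "open W" "c \<in> W" "closure W \<subseteq> - D"
      using paracompact_t2_regular[OF P \<open>open (- D)\<close>] by blast
    then show ?thesis
      by blast
  qed
  obtain W where W: "open W" "C \<subseteq> W" "closure W \<inter> D = {}"
    using paracompact_closure_separation[OF P \<open>closed C\<close> sep] by blast
  have "disjnt W (- closure W)"
    using closure_subset[of W] by (auto simp: disjnt_def)
  with W show "\<exists>U V. openin euclidean U \<and> openin euclidean V \<and> C \<subseteq> U \<and> D \<subseteq> V \<and> disjnt U V"
    by (intro exI[of _ W] exI[of _ "- closure W"]) auto
qed

lemma paracompact_t2_closure_refinement:
  fixes \<V> :: "'a::t2_space set set"
  assumes P: "paracompact_space TYPE('a)" and \<V>: "\<forall>V\<in>\<V>. open V" "\<Union>\<V> = UNIV"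
  shows "\<exists>\<W>. (\<forall>W\<in>\<W>. open W) \<and> \<Union>\<W> = UNIV \<and> (\<forall>W\<in>\<W>. \<exists>V\<in>\<V>. closure W \<subseteq> V) \<and>
              locally_finite_in euclidean \<W>"
proof -
  have "\<forall>x. \<exists>N. open N \<and> x \<in> N \<and> (\<exists>V\<in>\<V>. closure N \<subseteq> V)"
  proof
    fix x
    have "x \<in> \<Union>\<V>"
      using \<V>(2) by simp
    then obtain V where V: "V \<in> \<V>" "x \<in> V"
      by blast
    then have "open V"
      using \<V>(1) by blast
    then obtain N where "open N" "x \<in> N" "closure N \<subseteq> V"
      using paracompact_t2_regular[OF P _ \<open>x \<in> V\<close>] by blast
    with V(1) show "\<exists>N. open N \<and> x \<in> N \<and> (\<exists>V\<in>\<V>. closure N \<subseteq> V)"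
      by blast
  qed
  then obtain N where N: "\<forall>x. open (N x) \<and> x \<in> N x \<and> (\<exists>V\<in>\<V>. closure (N x) \<subseteq> V)"
    by (auto dest!: choice)
  have cover: "\<forall>U\<in>range N. open U" "\<Union>(range N) = UNIV"
    using N by blast+
  obtain \<W> where \<W>: "\<forall>W\<in>\<W>. open W" "\<Union>\<W> = UNIV"
    "\<forall>W\<in>\<W>. \<exists>U\<in>range N. W \<subseteq> U" "locally_finite_in euclidean \<W>"
    using paracompact_spaceD[OF P cover] by blast
  have "\<forall>W\<in>\<W>. \<exists>V\<in>\<V>. closure W \<subseteq> V"
  proof
    fix W assume "W \<in> \<W>"
    then obtain x where "W \<subseteq> N x"
      using \<W>(3) by blast
    then have "closure W \<subseteq> closure (N x)"
      by (rule closure_mono)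
    moreover obtain V where "V \<in> \<V>" "closure (N x) \<subseteq> V"
      using N by blast
    ultimately show "\<exists>V\<in>\<V>. closure W \<subseteq> V"
      by blast
  qed
  with \<W>(1,2,4) show ?thesis
    by (intro exI[of _ \<W>] conjI)
qed

lemma paracompact_closed_shrinking:
  fixes \<V> :: "'a::t2_space set set"
  assumes P: "paracompact_space TYPE('a)" and \<V>: "\<forall>V\<in>\<V>. open V" "\<Union>\<V> = UNIV"
  shows "\<exists>C. (\<forall>V. closed (C V) \<and> C V \<subseteq> V) \<and> (\<forall>z. \<exists>V\<in>\<V>. z \<in> C V)"
proof -
  obtain \<W> where \<W>: "\<forall>W\<in>\<W>. open W" "\<Union>\<W> = UNIV" "\<forall>W\<in>\<W>. \<exists>V\<in>\<V>. closure W \<subseteq> V"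
    "locally_finite_in euclidean \<W>"
    using paracompact_t2_closure_refinement[OF P \<V>] by metis
  define C where "C V = (\<Union>W\<in>{W\<in>\<W>. closure W \<subseteq> V}. closure W)" for V
  have "closed (C V)" for V
  proof -
    have "locally_finite_in euclidean {W\<in>\<W>. closure W \<subseteq> V}"
      by (rule locally_finite_in_subset[OF \<W>(4)]) blast
    then have "closedin euclidean (\<Union>W\<in>{W\<in>\<W>. closure W \<subseteq> V}. euclidean closure_of W)"
      by (rule closedin_Union_locally_finite_closure)
    then have "closedin euclidean (C V)"
      unfolding C_def by simp
    then show ?thesis
      unfolding closed_closedin .
  qed
  moreover have "C V \<subseteq> V" for V
    unfolding C_def by blast
  moreover have "\<exists>V\<in>\<V>. z \<in> C V" for z
  proof -
    have "z \<in> \<Union>\<W>"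
      using \<W>(2) by simp
    then obtain W where "W \<in> \<W>" "z \<in> W"
      by blast
    moreover obtain V where "V \<in> \<V>" "closure W \<subseteq> V"
      using \<W>(3) \<open>W \<in> \<W>\<close> by blast
    ultimately show ?thesis
      unfolding C_def using closure_subset[of W] by blast
  qed
  ultimately show ?thesis
    by (intro exI[of _ C]) blast
qed

lemma paracompact_bump_functions:
  fixes \<V> :: "'a::t2_space set set"
  assumes P: "paracompact_space TYPE('a)" and \<V>: "\<forall>V\<in>\<V>. open V" "\<Union>\<V> = UNIV"
  shows "\<exists>\<phi> :: 'a set \<Rightarrow> 'a \<Rightarrow> real.
           (\<forall>V\<in>\<V>. continuous_on UNIV (\<phi> V) \<and> (\<forall>z. 0 \<le> \<phi> V z) \<and> (\<forall>z. z \<notin> V \<longrightarrow> \<phi> V z = 0)) \<and>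
           (\<forall>z. \<exists>V\<in>\<V>. \<phi> V z = 1)"
proof -
  obtain C where C: "\<forall>V. closed (C V) \<and> C V \<subseteq> V" "\<forall>z. \<exists>V\<in>\<V>. z \<in> C V"
    using paracompact_closed_shrinking[OF P \<V>] by blast
  have normal: "normal_space (euclidean :: 'a topology)"
    by (rule paracompact_t2_imp_normal_space[OF P])
  have "\<forall>V\<in>\<V>. \<exists>\<phi>. continuous_on UNIV \<phi> \<and> (\<forall>z. 0 \<le> \<phi> z) \<and> (\<forall>z. z \<notin> V \<longrightarrow> \<phi> z = 0) \<and>
                     (\<forall>z\<in>C V. \<phi> z = (1::real))"
  proof
    fix V assume "V \<in> \<V>"
    then have "closedin euclidean (- V)" "closedin euclidean (C V)" "disjnt (- V) (C V)"
      using \<V>(1) C(1) by (auto simp: closed_closedin[symmetric] disjnt_def)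
    then obtain \<phi> where \<phi>: "continuous_map euclidean (top_of_set {0..1::real}) \<phi>"
      "\<phi> ` (- V) \<subseteq> {0}" "\<phi> ` C V \<subseteq> {1}"
      using Urysohn_lemma[OF normal, of "- V" "C V" 0 1] by auto
    then have "continuous_on UNIV \<phi>" "\<And>z. 0 \<le> \<phi> z"
      unfolding continuous_map_in_subtopology by auto
    with \<phi>(2,3) show "\<exists>\<phi>. continuous_on UNIV \<phi> \<and> (\<forall>z. 0 \<le> \<phi> z) \<and> (\<forall>z. z \<notin> V \<longrightarrow> \<phi> z = 0) \<and>
                     (\<forall>z\<in>C V. \<phi> z = (1::real))"
      by (intro exI[of _ \<phi>]) auto
  qed
  then obtain \<phi> where \<phi>: "\<forall>V\<in>\<V>. continuous_on UNIV (\<phi> V) \<and> (\<forall>z. 0 \<le> \<phi> V z) \<and>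
      (\<forall>z. z \<notin> V \<longrightarrow> \<phi> V z = 0) \<and> (\<forall>z\<in>C V. \<phi> V z = (1::real))"
    by (rule bchoice[THEN exE])
  have "\<exists>V\<in>\<V>. \<phi> V z = 1" for z
  proof -
    obtain V where "V \<in> \<V>" "z \<in> C V"
      using C(2) by blast
    with \<phi> show ?thesis
      by blast
  qed
  with \<phi> show ?thesis
    by (intro exI[of _ \<phi>]) blast
qed

lemma locally_finite_in_euclideanE:
  assumes "locally_finite_in euclidean \<V>"
  obtains N where "open N" "z \<in> N" "finite {V\<in>\<V>. V \<inter> N \<noteq> {}}"
  using assms unfolding locally_finite_in_def by auto

lemma locally_finite_in_imp_point_finite:
  assumes "locally_finite_in euclidean \<V>"
  shows "finite {V\<in>\<V>. z \<in> V}"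
proof -
  obtain N where "z \<in> N" "finite {V\<in>\<V>. V \<inter> N \<noteq> {}}"
    using locally_finite_in_euclideanE[OF assms] by blast
  moreover have "{V\<in>\<V>. z \<in> V} \<subseteq> {V\<in>\<V>. V \<inter> N \<noteq> {}}"
    using \<open>z \<in> N\<close> by blast
  ultimately show ?thesis
    using finite_subset by blast
qed

lemma continuous_on_locally_finite_sum:
  fixes h :: "'a set \<Rightarrow> 'a::topological_space \<Rightarrow> 'b::real_normed_vector"
  assumes lf: "locally_finite_in euclidean \<V>"
    and cont: "\<And>V. V \<in> \<V> \<Longrightarrow> continuous_on UNIV (h V)"
    and supp: "\<And>V z. V \<in> \<V> \<Longrightarrow> z \<notin> V \<Longrightarrow> h V z = 0"
  shows "continuous_on UNIV (\<lambda>z. \<Sum>V\<in>{V\<in>\<V>. z \<in> V}. h V z)" (is "continuous_on UNIV ?s")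
proof -
  have "\<exists>N. open N \<and> z0 \<in> N \<and> continuous_on N ?s" for z0
  proof -
    obtain N where N: "open N" "z0 \<in> N" and fin: "finite {V\<in>\<V>. V \<inter> N \<noteq> {}}"
      using locally_finite_in_euclideanE[OF lf] by blast
    define F where "F = {V\<in>\<V>. V \<inter> N \<noteq> {}}"
    have eq: "(\<Sum>V\<in>F. h V z) = ?s z" if "z \<in> N" for z
    proof (rule sum.mono_neutral_right)
      show "finite F"
        using fin unfolding F_def .
      show "{V\<in>\<V>. z \<in> V} \<subseteq> F"
        using that unfolding F_def by blast
      show "\<forall>V\<in>F - {V\<in>\<V>. z \<in> V}. h V z = 0"
        using supp unfolding F_def by blast
    qed
    have "continuous_on N (\<lambda>z. \<Sum>V\<in>F. h V z)"
    proof (rule continuous_on_sum)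
      show "continuous_on N (h V)" if "V \<in> F" for V
        by (rule continuous_on_subset[OF cont]) (use that in \<open>auto simp: F_def\<close>)
    qed
    then have "continuous_on N ?s"
      by (rule continuous_on_eq) (rule eq)
    with N show ?thesis
      by (intro exI[of _ N] conjI)
  qed
  then have "\<exists>N. \<forall>z0. open (N z0) \<and> z0 \<in> N z0 \<and> continuous_on (N z0) ?s"
    by (intro choice allI)
  then obtain N where N: "\<forall>z0. open (N z0) \<and> z0 \<in> N z0 \<and> continuous_on (N z0) ?s" ..
  have "continuous_on (\<Union>z0. N z0) ?s"
    using N by (intro continuous_on_open_UN) auto
  moreover have "(\<Union>z0. N z0) = UNIV"
    using N by blast
  ultimately show ?thesis
    by simp
qed

lemma locally_finite_weighted_average:
  fixes \<phi> :: "'a set \<Rightarrow> 'a::topological_space \<Rightarrow> real" and y :: "'a set \<Rightarrow> 'b::real_normed_vector"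
  assumes lf: "locally_finite_in euclidean \<V>"
    and cont: "\<And>V. V \<in> \<V> \<Longrightarrow> continuous_on UNIV (\<phi> V)"
    and nonneg: "\<And>V z. V \<in> \<V> \<Longrightarrow> 0 \<le> \<phi> V z"
    and supp: "\<And>V z. V \<in> \<V> \<Longrightarrow> z \<notin> V \<Longrightarrow> \<phi> V z = 0"
    and pos: "\<And>z. \<exists>V\<in>\<V>. 0 < \<phi> V z"
  shows "\<exists>g. continuous_on UNIV g \<and> (\<forall>z. g z \<in> convex hull (y ` {V\<in>\<V>. z \<in> V}))"
proof -
  define S where "S z = {V\<in>\<V>. z \<in> V}" for z
  define s where "s z = (\<Sum>V\<in>S z. \<phi> V z)" for z
  define g where "g z = (1 / s z) *\<^sub>R (\<Sum>V\<in>S z. \<phi> V z *\<^sub>R y V)" for z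
  have fin: "finite (S z)" for z
    unfolding S_def by (rule locally_finite_in_imp_point_finite[OF lf])
  have s_pos: "0 < s z" for z
  proof -
    obtain V where "V \<in> \<V>" "0 < \<phi> V z"
      using pos by blast
    moreover from this have "V \<in> S z"
      using supp unfolding S_def by force
    ultimately show ?thesis
      unfolding s_def using fin nonneg unfolding S_def by (intro sum_pos2) auto
  qed
  have "continuous_on UNIV s"
    unfolding s_def S_def using lf cont supp by (rule continuous_on_locally_finite_sum)
  moreover have "continuous_on UNIV (\<lambda>z. \<Sum>V\<in>S z. \<phi> V z *\<^sub>R y V)"
    unfolding S_def using lf
    by (rule continuous_on_locally_finite_sum) (auto intro!: continuous_intros cont supp)
  ultimately have "continuous_on UNIV g"
    unfolding g_def using s_pos by (intro continuous_intros) (auto simp: less_imp_neq[symmetric])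
  moreover have "g z \<in> convex hull (y ` S z)" for z
  proof -
    have "g z = (\<Sum>V\<in>S z. (\<phi> V z / s z) *\<^sub>R y V)"
      unfolding g_def by (simp add: scaleR_sum_right)
    also have "\<dots> \<in> convex hull (y ` S z)"
    proof (rule convex_sum[OF fin convex_convex_hull])
      show "(\<Sum>V\<in>S z. \<phi> V z / s z) = 1"
        using s_pos[of z] unfolding s_def by (simp add: sum_divide_distrib[symmetric])
      show "\<And>V. V \<in> S z \<Longrightarrow> 0 \<le> \<phi> V z / s z"
        using s_pos[of z] nonneg unfolding S_def by simp
      show "\<And>V. V \<in> S z \<Longrightarrow> y V \<in> convex hull (y ` S z)"
        by (simp add: hull_inc)
    qed
    finally show ?thesis .
  qed
  ultimately show ?thesis
    unfolding S_def by blast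
qed

lemma paracompact_open_graph_continuous_selection:
  fixes G :: "('a::t2_space \<times> 'b::real_normed_vector) set"
  assumes P: "paracompact_space TYPE('a)" and "open G"
    and convex: "\<And>x. convex (vsection G x)" and nonempty: "\<And>x. vsection G x \<noteq> {}"
  shows "\<exists>g. continuous_on UNIV g \<and> (\<forall>x. (x, g x) \<in> G)"
proof -
  have "\<forall>x. \<exists>v. (x, v) \<in> G"
    using nonempty unfolding vsection_def by auto
  then have "\<exists>y. \<forall>x. (x, y x) \<in> G"
    by (rule choice)
  then obtain y where y: "\<forall>x. (x, y x) \<in> G" ..
  define U where "U x = (\<lambda>z. (z, y x)) -` G" for x
  have "open (U x)" for x
    unfolding U_def by (intro open_vimage \<open>open G\<close> continuous_intros)
  moreover have "x \<in> U x" for x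
    unfolding U_def using y by simp
  ultimately have cover: "\<forall>V\<in>range U. open V" "\<Union>(range U) = UNIV"
    by blast+
  obtain \<V> where \<V>: "\<forall>V\<in>\<V>. open V" "\<Union>\<V> = UNIV"
    "\<forall>V\<in>\<V>. \<exists>U'\<in>range U. V \<subseteq> U'" "locally_finite_in euclidean \<V>"
    using paracompact_spaceD[OF P cover] by blast
  obtain c where c: "\<forall>V\<in>\<V>. V \<subseteq> U (c V)"
    using bchoice[of \<V> "\<lambda>V x. V \<subseteq> U x"] \<V>(3) by blast
  obtain \<phi> :: "'a set \<Rightarrow> 'a \<Rightarrow> real" where
    \<phi>: "\<forall>V\<in>\<V>. continuous_on UNIV (\<phi> V) \<and> (\<forall>z. 0 \<le> \<phi> V z) \<and> (\<forall>z. z \<notin> V \<longrightarrow> \<phi> V z = 0)"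
    and one: "\<forall>z. \<exists>V\<in>\<V>. \<phi> V z = 1"
    using paracompact_bump_functions[OF P \<V>(1,2)] by blast
  have "\<exists>V\<in>\<V>. 0 < \<phi> V z" for z
    using one by (metis zero_less_one)
  then obtain g where g: "continuous_on UNIV g"
    "\<And>z. g z \<in> convex hull ((\<lambda>V. y (c V)) ` {V\<in>\<V>. z \<in> V})"
    using locally_finite_weighted_average[OF \<V>(4), of \<phi> "\<lambda>V. y (c V)"] \<phi> by blast
  have "convex hull ((\<lambda>V. y (c V)) ` {V\<in>\<V>. z \<in> V}) \<subseteq> vsection G z" for z
  proof (rule hull_minimal)
    show "(\<lambda>V. y (c V)) ` {V\<in>\<V>. z \<in> V} \<subseteq> vsection G z"
      using c unfolding U_def vsection_def by auto
  qed (rule convex)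
  with g show ?thesis
    unfolding vsection_def by blast
qed

lemma shrinking_open_strips_imp_baire1:
  fixes f :: "'a::t2_space \<Rightarrow> 'b::real_normed_vector"
  assumes P: "paracompact_space TYPE('a)"
    and strip: "\<And>n. open_strip (G n)" and graph: "(\<Inter>n. G n) = graph_of f"
    and diam: "\<And>x. (\<lambda>n. ediam (vsection (G n) x)) \<longlonglongrightarrow> 0"
  shows "baire1 f"
proof -
  have f_in: "f x \<in> vsection (G n) x" for x n
    using graph unfolding graph_of_def vsection_def by blast
  have "\<forall>n. \<exists>g. continuous_on UNIV g \<and> (\<forall>x. (x, g x) \<in> G n)"
    using strip f_in unfolding open_strip_def
    by (blast intro: paracompact_open_graph_continuous_selection[OF P])
  then have "\<exists>g. \<forall>n. continuous_on UNIV (g n) \<and> (\<forall>x. (x, g n x) \<in> G n)"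
    by (rule choice)
  then obtain g where g: "\<forall>n. continuous_on UNIV (g n) \<and> (\<forall>x. (x, g n x) \<in> G n)" ..
  have g_in: "g n x \<in> vsection (G n) x" for n x
    using g unfolding vsection_def by simp
  have "(\<lambda>n. g n x) \<longlonglongrightarrow> f x" for x
    using tendsto_dist_of_ediam_zero[OF diam g_in f_in] by (rule tendsto_dist_iff[THEN iffD2])
  with g show ?thesis
    unfolding baire1_def by blast
qed

text \<open>Completeness of the target space is used in neither direction.\<close>

theorem theorem1p3:
  fixes f :: "'a::t2_space \<Rightarrow> 'b::banach"
  assumes "paracompact_space TYPE('a)"
  shows "baire1 f \<longleftrightarrow>
    (\<exists>G :: nat \<Rightarrow> ('a \<times> 'b) set. (\<forall>n. open_strip (G n)) \<and>
        (\<Inter>n. G n) = graph_of f \<and>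
        (\<forall>x. (\<lambda>n. ediam (vsection (G n) x)) \<longlonglongrightarrow> 0))"
  by (metis baire1_imp_shrinking_open_strips shrinking_open_strips_imp_baire1[OF assms])

end
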